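(* Let $X,Y$ be complex Banach spaces, let $\mathcal B$ be any family of compact subsets of $X$ such that every $x\in X$ belongs to some $B\in\mathcal B$, let $f:\mathbb R^n\to\mathbb C$ be Bohr almost periodic and let $F:\mathbb R^n\times X\to Y$ be Bohr $\mathcal B$-almost periodic. Then $F_1(\mathbf t;x):=f(\mathbf t)F(\mathbf t;x)$, $\mathbf t\in\mathbb R^n$, $x\in X$, is Bohr $\mathcal B$-almost periodic.
   Context: A continuous $f:\mathbb R^n\to\mathbb C$ is Bohr almost periodic if for every $\epsilon>0$ there is $l>0$ such that every closed ball of radius $l$ in $\mathbb R^n$ contains a $\tau$ with $|f(\mathbf t+\tau)-f(\mathbf t)|\le\epsilon$ for all $\mathbf t$. A continuous $F:\mathbb R^n\times X\to Y$ is Bohr $\mathcal B$-almost periodic if for every $B\in\mathcal B$ and $\epsilon>0$ there exists $l>0$ such that for each $\mathbf t_0\in\mathbb R^n$ there exists $\tau$ with $|\tau-\mathbf t_0|\le l$ and $\|F(\mathbf t+\tau;x)-F(\mathbf t;x)\|_Y\le\epsilon$ for all $\mathbf t\in\mathbb R^n$, $x\in B$. *)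

theory Defs
  imports "HOL-Analysis.Analysis"
begin

class complex_vector = real_vector +
  fixes scaleC :: "complex \<Rightarrow> 'a \<Rightarrow> 'a" (infixr \<open>*\<^sub>C\<close> 75)
  assumes scaleC_add_right: "a *\<^sub>C (x + y) = a *\<^sub>C x + a *\<^sub>C y"
    and scaleC_add_left: "(a + b) *\<^sub>C x = a *\<^sub>C x + b *\<^sub>C x"
    and scaleC_scaleC: "a *\<^sub>C (b *\<^sub>C x) = (a * b) *\<^sub>C x"
    and scaleC_one: "1 *\<^sub>C x = x"
    and scaleR_scaleC: "scaleR r x = (complex_of_real r) *\<^sub>C x"

class complex_normed_vector = complex_vector + real_normed_vector +
  assumes norm_scaleC: "norm (a *\<^sub>C x) = cmod a * norm x"

definition bohr_ap :: "(real ^ 'n \<Rightarrow> complex) \<Rightarrow> bool" where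
  "bohr_ap f \<longleftrightarrow> continuous_on UNIV f \<and>
     (\<forall>\<epsilon>>0. \<exists>l>0. \<forall>t0. \<exists>\<tau>\<in>cball t0 l. \<forall>t. cmod (f (t + \<tau>) - f t) \<le> \<epsilon>)"

definition bohr_B_ap ::
  "'x set set \<Rightarrow> (real ^ 'n \<Rightarrow> 'x::topological_space \<Rightarrow> 'y::real_normed_vector) \<Rightarrow> bool" where
  "bohr_B_ap \<B> F \<longleftrightarrow> continuous_on UNIV (\<lambda>(t, x). F t x) \<and>
     (\<forall>B\<in>\<B>. \<forall>\<epsilon>>0. \<exists>l>0. \<forall>t0. \<exists>\<tau>. dist \<tau> t0 \<le> l \<and>
        (\<forall>t. \<forall>x\<in>B. norm (F (t + \<tau>) x - F t x) \<le> \<epsilon>))"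

end

theory Submission
  imports Defs
begin

text \<open>If \<open>\<tau>\<close> is a common \<open>\<delta>\<close>-almost period of \<open>f\<close> and of \<open>F(\<cdot>; x)\<close>, uniformly for \<open>x \<in> B\<close>,
  then splitting \<open>f(t+\<tau>)F(t+\<tau>;x) - f(t)F(t;x) = (f(t+\<tau>) - f(t))F(t+\<tau>;x) + f(t)(F(t+\<tau>;x) - F(t;x))\<close>
  shows that it is an almost period of \<open>fF\<close> up to \<open>\<delta>(sup |f| + sup\<^sub>B \<parallel>F\<parallel>)\<close>; both suprema are finite
  because an almost periodic function takes all its values (up to \<open>\<delta>\<close>) on a compact set.
  It remains to see that common almost periods are relatively dense (Bohr): differences of
  \<open>\<epsilon>\<close>-almost periods are \<open>2\<epsilon>\<close>-almost periods, and by compactness finitely many such differences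
  approximate the difference of any two almost periods of \<open>F\<close> and \<open>f\<close> lying near a given point;
  uniform continuity of \<open>f\<close> turns this approximation into a common almost period.\<close>

definition relatively_dense :: "'a::metric_space set \<Rightarrow> bool" where
  "relatively_dense S \<longleftrightarrow> (\<exists>l>0. \<forall>t0. \<exists>\<tau>\<in>S. dist \<tau> t0 \<le> l)"

definition almost_periods :: "real \<Rightarrow> ('a::real_normed_vector \<Rightarrow> 'b::real_normed_vector) \<Rightarrow> 'a set" where
  "almost_periods \<epsilon> g = {\<tau>. \<forall>t. norm (g (t + \<tau>) - g t) \<le> \<epsilon>}"

lemma relatively_dense_mono: "relatively_dense S \<Longrightarrow> S \<subseteq> T \<Longrightarrow> relatively_dense T"
  unfolding relatively_dense_def by blast

lemma bohr_ap_iff: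
  "bohr_ap f \<longleftrightarrow> continuous_on UNIV f \<and> (\<forall>\<epsilon>>0. relatively_dense (almost_periods \<epsilon> f))"
  unfolding bohr_ap_def relatively_dense_def almost_periods_def mem_cball Bex_def
  by (simp add: dist_commute conj_commute)

lemma bohr_B_ap_iff:
  "bohr_B_ap \<B> F \<longleftrightarrow> continuous_on UNIV (\<lambda>(t, x). F t x) \<and>
     (\<forall>B\<in>\<B>. \<forall>\<epsilon>>0. relatively_dense (\<Inter>x\<in>B. almost_periods \<epsilon> (\<lambda>t. F t x)))"
  unfolding bohr_B_ap_def relatively_dense_def almost_periods_def Bex_def
  by (simp add: conj_commute) fast

lemma almost_periods_mono: "\<epsilon> \<le> \<epsilon>' \<Longrightarrow> almost_periods \<epsilon> g \<subseteq> almost_periods \<epsilon>' g"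
  unfolding almost_periods_def by (auto intro: order_trans)

lemma almost_periods_diff:
  assumes "\<sigma> \<in> almost_periods \<epsilon> g" and "\<sigma>' \<in> almost_periods \<epsilon>' g"
  shows "\<sigma> - \<sigma>' \<in> almost_periods (\<epsilon> + \<epsilon>') g"
  unfolding almost_periods_def mem_Collect_eq
proof
  fix t
  have "g (t + (\<sigma> - \<sigma>')) - g t = (g ((t - \<sigma>') + \<sigma>) - g (t - \<sigma>')) - (g ((t - \<sigma>') + \<sigma>') - g (t - \<sigma>'))"
    by (simp add: algebra_simps)
  also have "norm \<dots> \<le> norm (g ((t - \<sigma>') + \<sigma>) - g (t - \<sigma>')) + norm (g ((t - \<sigma>') + \<sigma>') - g (t - \<sigma>'))"
    by (rule norm_triangle_ineq4)
  also have "\<dots> \<le> \<epsilon> + \<epsilon>'"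
    using assms unfolding almost_periods_def mem_Collect_eq by (intro add_mono) blast+
  finally show "norm (g (t + (\<sigma> - \<sigma>')) - g t) \<le> \<epsilon> + \<epsilon>'" .
qed

lemma bounded_bilinear_scaleC: "bounded_bilinear (\<lambda>a (x::'a::complex_normed_vector). a *\<^sub>C x)"
proof (rule bounded_bilinear.intro)
  show "\<exists>K. \<forall>a x::'a. norm (a *\<^sub>C x) \<le> cmod a * norm x * K"
    by (rule exI[of _ 1]) (simp add: norm_scaleC)
qed (simp_all add: scaleC_add_left scaleC_add_right scaleR_scaleC scaleC_scaleC scaleR_conv_of_real
       mult.commute)

lemma almost_periods_scaleC:
  fixes f :: "'a::real_normed_vector \<Rightarrow> complex" and g :: "'a \<Rightarrow> 'b::complex_normed_vector"
  assumes "\<tau> \<in> almost_periods \<epsilon> f" and "\<tau> \<in> almost_periods \<epsilon>' g"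
    and "\<And>t. cmod (f t) \<le> M" and "\<And>t. norm (g t) \<le> M'"
  shows "\<tau> \<in> almost_periods (\<epsilon> * M' + M * \<epsilon>') (\<lambda>t. f t *\<^sub>C g t)"
  unfolding almost_periods_def mem_Collect_eq
proof
  interpret bounded_bilinear "\<lambda>a (x::'b). a *\<^sub>C x" by (rule bounded_bilinear_scaleC)
  fix t
  have "f (t + \<tau>) *\<^sub>C g (t + \<tau>) - f t *\<^sub>C g t = (f (t + \<tau>) - f t) *\<^sub>C g (t + \<tau>) + f t *\<^sub>C (g (t + \<tau>) - g t)"
    by (simp add: diff_left diff_right)
  also have "norm \<dots> \<le> cmod (f (t + \<tau>) - f t) * norm (g (t + \<tau>)) + cmod (f t) * norm (g (t + \<tau>) - g t)"
    by (rule order_trans[OF norm_triangle_ineq]) (simp add: norm_scaleC)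
  also have "\<dots> \<le> \<epsilon> * M' + M * \<epsilon>'"
    using assms unfolding almost_periods_def mem_Collect_eq
    by (intro add_mono mult_mono) (auto intro: order_trans[OF norm_ge_zero])
  finally show "norm (f (t + \<tau>) *\<^sub>C g (t + \<tau>) - f t *\<^sub>C g t) \<le> \<epsilon> * M' + M * \<epsilon>'" .
qed

lemma almost_periodic_imp_bounded:
  fixes F :: "'a::{real_normed_vector, heine_borel} \<Rightarrow> 'x::topological_space \<Rightarrow> 'y::real_normed_vector"
  assumes "continuous_on (UNIV \<times> B) (\<lambda>(t, x). F t x)" and "compact B"
    and "relatively_dense (\<Inter>x\<in>B. almost_periods \<epsilon> (\<lambda>t. F t x))"
  shows "bounded ((\<lambda>(t, x). F t x) ` (UNIV \<times> B))"
proof -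
  obtain l where l: "\<And>t0. \<exists>\<tau>\<in>\<Inter>x\<in>B. almost_periods \<epsilon> (\<lambda>t. F t x). dist \<tau> t0 \<le> l"
    using assms(3) unfolding relatively_dense_def by blast
  have "compact ((\<lambda>(t, x). F t x) ` (cball 0 l \<times> B))"
    by (intro compact_continuous_image continuous_on_subset[OF assms(1)] compact_Times assms(2)) auto
  then have "bounded ((\<lambda>(t, x). F t x) ` (cball 0 l \<times> B))"
    by (rule compact_imp_bounded)
  then obtain M where "\<forall>y\<in>(\<lambda>(t, x). F t x) ` (cball 0 l \<times> B). norm y \<le> M"
    unfolding bounded_iff by (elim exE)
  then have M: "norm (F t x) \<le> M" if "t \<in> cball 0 l" "x \<in> B" for t x
    using that by auto
  have "norm (F t x) \<le> M + \<epsilon>" if "x \<in> B" for t x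
  proof -
    \<comment> \<open>an almost period near \<open>-t\<close> moves \<open>t\<close> into \<open>cball 0 l\<close>\<close>
    obtain \<tau> where "\<tau> \<in> (\<Inter>x\<in>B. almost_periods \<epsilon> (\<lambda>t. F t x))" and "dist \<tau> (- t) \<le> l"
      using l[of "- t"] ..
    then have \<tau>: "\<tau> \<in> almost_periods \<epsilon> (\<lambda>t. F t x)" and "t + \<tau> \<in> cball 0 l"
      using that by (auto simp: dist_norm norm_minus_commute add.commute)
    then have "norm (F (t + \<tau>) x) \<le> M" using M that by blast
    moreover have "norm (F (t + \<tau>) x - F t x) \<le> \<epsilon>"
      using \<tau> unfolding almost_periods_def by simp
    ultimately show ?thesis using norm_triangle_ineq4[of "F (t + \<tau>) x" "F (t + \<tau>) x - F t x"] by simp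
  qed
  then show ?thesis unfolding bounded_iff by (auto intro!: exI[of _ "M + \<epsilon>"])
qed

lemma almost_periodic_imp_bounded_range:
  fixes g :: "'a::{real_normed_vector, heine_borel} \<Rightarrow> 'b::real_normed_vector"
  assumes "continuous_on UNIV g" and "relatively_dense (almost_periods \<epsilon> g)"
  shows "bounded (range g)"
proof -
  have "bounded ((\<lambda>(t, _::real). g t) ` (UNIV \<times> {0}))"
  proof (rule almost_periodic_imp_bounded)
    show "continuous_on (UNIV \<times> {0}) (\<lambda>(t, _::real). g t)"
      unfolding case_prod_beta' by (intro continuous_on_compose2[OF assms(1)] continuous_intros) auto
  qed (use assms(2) in simp_all)
  moreover have "(\<lambda>(t, _::real). g t) ` (UNIV \<times> {0}) = range g"
    by force
  ultimately show ?thesis by simp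
qed

lemma almost_periodic_imp_uniformly_continuous:
  fixes g :: "'a::{real_normed_vector, heine_borel} \<Rightarrow> 'b::real_normed_vector"
  assumes cont: "continuous_on UNIV g" and ap: "\<And>\<epsilon>. \<epsilon> > 0 \<Longrightarrow> relatively_dense (almost_periods \<epsilon> g)"
  shows "uniformly_continuous_on UNIV g"
  unfolding uniformly_continuous_on_def
proof (intro allI impI)
  fix e :: real assume "e > 0"
  obtain l where l: "\<And>t0. \<exists>\<tau>\<in>almost_periods (e/3) g. dist \<tau> t0 \<le> l"
    using ap[of "e/3"] \<open>e > 0\<close> unfolding relatively_dense_def by auto
  have "uniformly_continuous_on (cball 0 (l + 1)) g"
    by (intro compact_uniformly_continuous continuous_on_subset[OF cont]) auto
  then obtain d where "d > 0" and d: "\<And>x x'. x \<in> cball 0 (l + 1) \<Longrightarrow> x' \<in> cball 0 (l + 1) \<Longrightarrow>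
      dist x' x < d \<Longrightarrow> dist (g x') (g x) < e/3"
    using \<open>e > 0\<close> unfolding uniformly_continuous_on_def by (metis divide_pos_pos zero_less_numeral)
  show "\<exists>d>0. \<forall>s\<in>UNIV. \<forall>t\<in>UNIV. dist t s < d \<longrightarrow> dist (g t) (g s) < e"
  proof (intro exI[of _ "min d 1"] conjI ballI impI)
    show "min d 1 > 0" using \<open>d > 0\<close> by simp
    fix s t :: 'a assume ts: "dist t s < min d 1"
    \<comment> \<open>translate \<open>s\<close> and \<open>t\<close> by an almost period into a fixed compact ball\<close>
    obtain \<tau> where \<tau>: "\<tau> \<in> almost_periods (e/3) g" and "dist \<tau> (- s) \<le> l"
      using l[of "- s"] ..
    then have "norm (s + \<tau>) \<le> l" by (simp add: dist_norm add.commute)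
    moreover have "norm (t + \<tau>) \<le> norm (s + \<tau>) + dist t s"
      using norm_triangle_ineq[of "s + \<tau>" "t - s"] by (simp add: dist_norm add.commute)
    moreover have "dist (t + \<tau>) (s + \<tau>) = dist t s" by (simp add: dist_norm)
    ultimately have "dist (g (t + \<tau>)) (g (s + \<tau>)) < e/3"
      using ts by (intro d) auto
    moreover have "dist (g t) (g (t + \<tau>)) \<le> e/3" and "dist (g (s + \<tau>)) (g s) \<le> e/3"
      using \<tau> unfolding almost_periods_def by (simp_all add: dist_norm norm_minus_commute)
    ultimately show "dist (g t) (g s) < e"
      using dist_triangle[of "g t" "g s" "g (t + \<tau>)"] dist_triangle[of "g (t + \<tau>)" "g s" "g (s + \<tau>)"]
      by linarith
  qed
qed

lemma finite_net_of_differences: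
  fixes S1 S2 :: "'a::{real_normed_vector, heine_borel} set"
  assumes "d > 0"
  obtains P where "finite P" and "P \<subseteq> S1 \<times> S2"
    and "\<And>\<tau>1 \<tau>2. \<tau>1 \<in> S1 \<Longrightarrow> \<tau>2 \<in> S2 \<Longrightarrow> norm (\<tau>1 - \<tau>2) \<le> r \<Longrightarrow>
           \<exists>(\<rho>1, \<rho>2)\<in>P. dist (\<tau>1 - \<tau>2) (\<rho>1 - \<rho>2) < d"
proof -
  have "cball (0::'a) r \<subseteq> (\<Union>c\<in>cball 0 r. ball c (d/2))"
    using \<open>d > 0\<close> by auto
  then obtain K where "finite K" and K: "cball (0::'a) r \<subseteq> (\<Union>c\<in>K. ball c (d/2))"
    by (meson compactE_image compact_cball open_ball)
  define K' where "K' = {c\<in>K. \<exists>\<rho>1\<in>S1. \<exists>\<rho>2\<in>S2. dist (\<rho>1 - \<rho>2) c < d/2}"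
  have "\<forall>c\<in>K'. \<exists>\<rho>. \<rho> \<in> S1 \<times> S2 \<and> dist (fst \<rho> - snd \<rho>) c < d/2"
    unfolding K'_def by force
  then obtain \<rho> where \<rho>: "\<And>c. c \<in> K' \<Longrightarrow> \<rho> c \<in> S1 \<times> S2"
    and \<rho>_close: "\<And>c. c \<in> K' \<Longrightarrow> dist (fst (\<rho> c) - snd (\<rho> c)) c < d/2"
    by metis
  show ?thesis
  proof
    show "finite (\<rho> ` K')"
      using \<open>finite K\<close> unfolding K'_def by simp
    show "\<rho> ` K' \<subseteq> S1 \<times> S2"
      using \<rho> by (rule image_subsetI)
  next
    fix \<tau>1 \<tau>2 assume "\<tau>1 \<in> S1" "\<tau>2 \<in> S2" "norm (\<tau>1 - \<tau>2) \<le> r"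
    then have "\<tau>1 - \<tau>2 \<in> (\<Union>c\<in>K. ball c (d/2))" by (intro subsetD[OF K]) simp
    then obtain c where "c \<in> K" and "\<tau>1 - \<tau>2 \<in> ball c (d/2)" by (rule UN_E)
    then have c: "dist (\<tau>1 - \<tau>2) c < d/2" by (simp add: dist_commute)
    with \<open>c \<in> K\<close> \<open>\<tau>1 \<in> S1\<close> \<open>\<tau>2 \<in> S2\<close> have "c \<in> K'"
      unfolding K'_def by blast
    have "dist (\<tau>1 - \<tau>2) (fst (\<rho> c) - snd (\<rho> c)) < d"
      using c \<rho>_close[OF \<open>c \<in> K'\<close>] by (rule dist_triangle_half_l)
    with \<open>c \<in> K'\<close> show "\<exists>(\<rho>1, \<rho>2)\<in>\<rho> ` K'. dist (\<tau>1 - \<tau>2) (\<rho>1 - \<rho>2) < d"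
      by (intro bexI[of _ "\<rho> c"]) (simp_all add: case_prod_beta)
  qed
qed

lemma relatively_dense_near_differences:
  fixes S1 S2 :: "'a::{real_normed_vector, heine_borel} set"
  assumes S1: "relatively_dense S1" and S2: "relatively_dense S2" and "d > 0"
  shows "relatively_dense {\<sigma>1 - \<sigma>1' | \<sigma>1 \<sigma>1'. \<sigma>1 \<in> S1 \<and> \<sigma>1' \<in> S1 \<and>
      (\<exists>\<sigma>2\<in>S2. \<exists>\<sigma>2'\<in>S2. dist (\<sigma>1 - \<sigma>1') (\<sigma>2 - \<sigma>2') < d)}" (is "relatively_dense ?D")
proof -
  obtain l1 where "l1 > 0" and l1: "\<And>t0. \<exists>\<tau>\<in>S1. dist \<tau> t0 \<le> l1"
    using S1 unfolding relatively_dense_def by blast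
  obtain l2 where l2: "\<And>t0. \<exists>\<tau>\<in>S2. dist \<tau> t0 \<le> l2"
    using S2 unfolding relatively_dense_def by blast
  obtain P where "finite P" and P: "P \<subseteq> S1 \<times> S2"
    and net: "\<And>\<tau>1 \<tau>2. \<tau>1 \<in> S1 \<Longrightarrow> \<tau>2 \<in> S2 \<Longrightarrow> norm (\<tau>1 - \<tau>2) \<le> l1 + l2 \<Longrightarrow>
           \<exists>(\<rho>1, \<rho>2)\<in>P. dist (\<tau>1 - \<tau>2) (\<rho>1 - \<rho>2) < d"
    by (rule finite_net_of_differences[OF \<open>d > 0\<close>, of S1 S2 "l1 + l2"]) (rule that)
  have "bounded (fst ` P)"
    using \<open>finite P\<close> by auto
  then obtain R where "R > 0" and R: "\<And>\<rho>1 \<rho>2. (\<rho>1, \<rho>2) \<in> P \<Longrightarrow> norm \<rho>1 \<le> R"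
    unfolding bounded_pos by force
  have "\<exists>\<tau>\<in>?D. dist \<tau> t0 \<le> l1 + R" for t0
  proof -
    obtain \<tau>1 \<tau>2 where "\<tau>1 \<in> S1" "dist \<tau>1 t0 \<le> l1" "\<tau>2 \<in> S2" "dist \<tau>2 t0 \<le> l2"
      using l1 l2 by blast
    moreover have "dist \<tau>1 \<tau>2 \<le> dist \<tau>1 t0 + dist \<tau>2 t0" by (rule dist_triangle2)
    ultimately have "norm (\<tau>1 - \<tau>2) \<le> l1 + l2"
      by (simp add: dist_norm norm_minus_commute)
    with net[OF \<open>\<tau>1 \<in> S1\<close> \<open>\<tau>2 \<in> S2\<close>] obtain \<rho>1 \<rho>2
      where "(\<rho>1, \<rho>2) \<in> P" and close: "dist (\<tau>1 - \<tau>2) (\<rho>1 - \<rho>2) < d"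
      by auto
    moreover from this(1) have "\<rho>1 \<in> S1" "\<rho>2 \<in> S2"
      using P by auto
    moreover have "dist (\<tau>1 - \<rho>1) (\<tau>2 - \<rho>2) < d"
      using close by (simp add: dist_norm algebra_simps)
    ultimately have "\<tau>1 - \<rho>1 \<in> ?D"
      using \<open>\<tau>1 \<in> S1\<close> \<open>\<tau>2 \<in> S2\<close> by blast
    moreover have "dist (\<tau>1 - \<rho>1) t0 \<le> l1 + R"
    proof -
      have "dist (\<tau>1 - \<rho>1) t0 = norm ((\<tau>1 - t0) - \<rho>1)"
        by (simp add: dist_norm algebra_simps)
      also have "\<dots> \<le> dist \<tau>1 t0 + norm \<rho>1"
        unfolding dist_norm by (rule norm_triangle_ineq4)
      finally show ?thesis
        using \<open>dist \<tau>1 t0 \<le> l1\<close> R[OF \<open>(\<rho>1, \<rho>2) \<in> P\<close>] by linarith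
    qed
    ultimately show ?thesis by (rule bexI[rotated])
  qed
  moreover have "l1 + R > 0"
    using \<open>l1 > 0\<close> \<open>R > 0\<close> by simp
  ultimately show ?thesis
    unfolding relatively_dense_def by meson
qed

lemma relatively_dense_common_almost_periods:
  fixes G :: "'i \<Rightarrow> 'a::{real_normed_vector, heine_borel} \<Rightarrow> 'b::real_normed_vector"
    and g :: "'a \<Rightarrow> 'c::real_normed_vector"
  assumes G: "\<And>\<epsilon>. \<epsilon> > 0 \<Longrightarrow> relatively_dense (\<Inter>i\<in>I. almost_periods \<epsilon> (G i))"
    and g: "\<And>\<epsilon>. \<epsilon> > 0 \<Longrightarrow> relatively_dense (almost_periods \<epsilon> g)"
    and "uniformly_continuous_on UNIV g" and "\<epsilon> > 0"
  shows "relatively_dense ((\<Inter>i\<in>I. almost_periods \<epsilon> (G i)) \<inter> almost_periods \<epsilon> g)"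
proof -
  obtain d where "d > 0" and d: "\<And>s t. dist t s < d \<Longrightarrow> dist (g t) (g s) < \<epsilon>/3"
    using assms(3) \<open>\<epsilon> > 0\<close> unfolding uniformly_continuous_on_def
    by (metis UNIV_I divide_pos_pos zero_less_numeral)
  let ?S1 = "\<Inter>i\<in>I. almost_periods (\<epsilon>/3) (G i)" and ?S2 = "almost_periods (\<epsilon>/3) g"
  have "relatively_dense {\<sigma>1 - \<sigma>1' | \<sigma>1 \<sigma>1'. \<sigma>1 \<in> ?S1 \<and> \<sigma>1' \<in> ?S1 \<and>
      (\<exists>\<sigma>2\<in>?S2. \<exists>\<sigma>2'\<in>?S2. dist (\<sigma>1 - \<sigma>1') (\<sigma>2 - \<sigma>2') < d)}" (is "relatively_dense ?D")
    using G g \<open>\<epsilon> > 0\<close> \<open>d > 0\<close> by (intro relatively_dense_near_differences) auto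
  moreover have "?D \<subseteq> (\<Inter>i\<in>I. almost_periods \<epsilon> (G i)) \<inter> almost_periods \<epsilon> g"
  proof
    fix \<tau> assume "\<tau> \<in> ?D"
    then obtain \<sigma>1 \<sigma>1' \<sigma>2 \<sigma>2' where \<tau>: "\<tau> = \<sigma>1 - \<sigma>1'" and "\<sigma>1 \<in> ?S1" "\<sigma>1' \<in> ?S1"
      and "\<sigma>2 \<in> ?S2" "\<sigma>2' \<in> ?S2" and close: "dist \<tau> (\<sigma>2 - \<sigma>2') < d"
      by blast
    have "\<tau> \<in> almost_periods (\<epsilon>/3 + \<epsilon>/3) (G i)" if "i \<in> I" for i
      unfolding \<tau> using \<open>\<sigma>1 \<in> ?S1\<close> \<open>\<sigma>1' \<in> ?S1\<close> that by (intro almost_periods_diff) auto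
    then have "\<tau> \<in> (\<Inter>i\<in>I. almost_periods \<epsilon> (G i))"
      using almost_periods_mono[of "\<epsilon>/3 + \<epsilon>/3" \<epsilon>] \<open>\<epsilon> > 0\<close> by auto
    moreover have "\<tau> \<in> almost_periods \<epsilon> g"
      unfolding almost_periods_def mem_Collect_eq
    proof
      \<comment> \<open>\<open>\<tau>\<close> is \<open>d\<close>-close to the \<open>2\<epsilon>/3\<close>-almost period \<open>\<sigma>2 - \<sigma>2'\<close> of \<open>g\<close>\<close>
      fix t
      have "norm (g (t + (\<sigma>2 - \<sigma>2')) - g t) \<le> \<epsilon>/3 + \<epsilon>/3"
        using almost_periods_diff[OF \<open>\<sigma>2 \<in> ?S2\<close> \<open>\<sigma>2' \<in> ?S2\<close>] unfolding almost_periods_def by blast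
      moreover have "dist (g (t + \<tau>)) (g (t + (\<sigma>2 - \<sigma>2'))) < \<epsilon>/3"
        using close by (intro d) (simp add: dist_norm)
      ultimately show "norm (g (t + \<tau>) - g t) \<le> \<epsilon>"
        using norm_triangle_ineq[of "g (t + \<tau>) - g (t + (\<sigma>2 - \<sigma>2'))" "g (t + (\<sigma>2 - \<sigma>2')) - g t"]
        by (simp add: dist_norm)
    qed
    ultimately show "\<tau> \<in> (\<Inter>i\<in>I. almost_periods \<epsilon> (G i)) \<inter> almost_periods \<epsilon> g" by blast
  qed
  ultimately show ?thesis by (rule relatively_dense_mono)
qed

lemma relatively_dense_almost_periods_scaleC:
  fixes f :: "'a::{real_normed_vector, heine_borel} \<Rightarrow> complex"
    and F :: "'a \<Rightarrow> 'x::topological_space \<Rightarrow> 'y::complex_normed_vector"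
  assumes f_cont: "continuous_on UNIV f"
    and f_ap: "\<And>\<epsilon>. \<epsilon> > 0 \<Longrightarrow> relatively_dense (almost_periods \<epsilon> f)"
    and F_cont: "continuous_on (UNIV \<times> B) (\<lambda>(t, x). F t x)" and "compact B"
    and F_ap: "\<And>\<epsilon>. \<epsilon> > 0 \<Longrightarrow> relatively_dense (\<Inter>x\<in>B. almost_periods \<epsilon> (\<lambda>t. F t x))"
    and "\<epsilon> > 0"
  shows "relatively_dense (\<Inter>x\<in>B. almost_periods \<epsilon> (\<lambda>t. f t *\<^sub>C F t x))"
proof -
  have "bounded (range f)"
    using f_cont f_ap[of 1] by (rule almost_periodic_imp_bounded_range) simp
  then obtain Mf where "Mf > 0" and Mf: "\<And>t. cmod (f t) \<le> Mf"
    unfolding bounded_pos by auto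
  have "bounded ((\<lambda>(t, x). F t x) ` (UNIV \<times> B))"
    using F_cont \<open>compact B\<close> F_ap[of 1] by (rule almost_periodic_imp_bounded) simp
  then obtain MF where "MF > 0" and MF: "\<And>t x. x \<in> B \<Longrightarrow> norm (F t x) \<le> MF"
    unfolding bounded_pos by auto
  define \<delta> where "\<delta> = \<epsilon> / (Mf + MF)"
  have "\<delta> > 0"
    using \<open>\<epsilon> > 0\<close> \<open>Mf > 0\<close> \<open>MF > 0\<close> by (simp add: \<delta>_def)
  have "\<delta> * MF + Mf * \<delta> = \<delta> * (Mf + MF)"
    by (simp add: algebra_simps)
  also have "\<dots> = \<epsilon>"
    using \<open>Mf > 0\<close> \<open>MF > 0\<close> by (simp add: \<delta>_def)
  finally have \<delta>: "\<delta> * MF + Mf * \<delta> = \<epsilon>" .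
  have "uniformly_continuous_on UNIV f"
    using f_cont f_ap by (rule almost_periodic_imp_uniformly_continuous)
  with F_ap f_ap \<open>\<delta> > 0\<close>
  have "relatively_dense ((\<Inter>x\<in>B. almost_periods \<delta> (\<lambda>t. F t x)) \<inter> almost_periods \<delta> f)"
    by (intro relatively_dense_common_almost_periods)
  moreover have "(\<Inter>x\<in>B. almost_periods \<delta> (\<lambda>t. F t x)) \<inter> almost_periods \<delta> f
      \<subseteq> (\<Inter>x\<in>B. almost_periods \<epsilon> (\<lambda>t. f t *\<^sub>C F t x))"
  proof (intro subsetI INT_I)
    fix \<tau> x assume "\<tau> \<in> (\<Inter>x\<in>B. almost_periods \<delta> (\<lambda>t. F t x)) \<inter> almost_periods \<delta> f" and "x \<in> B"
    then have "\<tau> \<in> almost_periods (\<delta> * MF + Mf * \<delta>) (\<lambda>t. f t *\<^sub>C F t x)"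
      by (intro almost_periods_scaleC Mf MF) auto
    then show "\<tau> \<in> almost_periods \<epsilon> (\<lambda>t. f t *\<^sub>C F t x)"
      unfolding \<delta> .
  qed
  ultimately show ?thesis by (rule relatively_dense_mono)
qed

theorem proposition2p19:
  fixes \<B> :: "'x::{complex_normed_vector, banach} set set"
    and f :: "real ^ 'n \<Rightarrow> complex"
    and F :: "real ^ 'n \<Rightarrow> 'x \<Rightarrow> 'y::{complex_normed_vector, banach}"
  assumes "\<forall>B\<in>\<B>. compact B"
    and "\<forall>x. \<exists>B\<in>\<B>. x \<in> B"
    and "bohr_ap f"
    and "bohr_B_ap \<B> F"
  shows "bohr_B_ap \<B> (\<lambda>t x. f t *\<^sub>C F t x)"
proof -
  have f_cont: "continuous_on UNIV f" and f_ap: "\<And>\<epsilon>. \<epsilon> > 0 \<Longrightarrow> relatively_dense (almost_periods \<epsilon> f)"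
    using assms(3) unfolding bohr_ap_iff by auto
  have F_cont: "continuous_on UNIV (\<lambda>(t, x). F t x)"
    and F_ap: "\<And>B \<epsilon>. B \<in> \<B> \<Longrightarrow> \<epsilon> > 0 \<Longrightarrow> relatively_dense (\<Inter>x\<in>B. almost_periods \<epsilon> (\<lambda>t. F t x))"
    using assms(4) unfolding bohr_B_ap_iff by auto
  have "continuous_on UNIV (\<lambda>z. f (fst z) *\<^sub>C (\<lambda>(t, x). F t x) z)"
    by (intro bounded_bilinear.continuous_on[OF bounded_bilinear_scaleC] F_cont
        continuous_on_compose2[OF f_cont continuous_on_fst]) auto
  then have "continuous_on UNIV (\<lambda>(t, x). f t *\<^sub>C F t x)"
    by (simp add: case_prod_beta')
  moreover have "relatively_dense (\<Inter>x\<in>B. almost_periods \<epsilon> (\<lambda>t. f t *\<^sub>C F t x))"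
    if "B \<in> \<B>" and "\<epsilon> > 0" for B \<epsilon>
    using f_cont f_ap continuous_on_subset[OF F_cont] assms(1) F_ap that
    by (intro relatively_dense_almost_periods_scaleC) auto
  ultimately show ?thesis
    unfolding bohr_B_ap_iff by blast
qed

end
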